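(* Let $H \in \mathbb{R}^{r \times n}_+$ be an entrywise nonnegative matrix satisfying the NC-SSC, i.e., $e - e_i \in \operatorname{cone}(H)$ for all $i \in \{1,\dots,r\}$. Define $$p^* = \max_{x \in \mathbb{R}^r} \|x\|_2 \ \text{ subject to } \ e^\top x = 1,\ H^\top x \ge 0,$$ and $$q^* = \max_{x \in \mathbb{R}^r} \|x\|_2 \ \text{ subject to } \ e^\top x = 1,\ H^\top x \ge 0,\ -1 \le x_i \le 1 \text{ for all } i.$$ Then $p^* = 1$ if and only if $q^* = 1$.
   Context: $e \in \mathbb{R}^r$ denotes the all-ones vector, $e_i$ the $i$-th standard unit vector of $\mathbb{R}^r$, $\|\cdot\|_2$ the Euclidean norm, and inequalities between vectors are entrywise. For $H \in \mathbb{R}^{r\times n}$, $\operatorname{cone}(H) = \{ Hy : y \in \mathbb{R}^n, y \ge 0\}$. The NC-SSC for $H$ means $\operatorname{cone}(ee^\top - I) \subseteq \operatorname{cone}(H)$, equivalently $e - e_i \in \operatorname{cone}(H)$ for all $i$. *)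

theory Defs
  imports "HOL-Analysis.Analysis"
begin

text \<open>Matrices H in R^{r x n} are rendered as real^'n^'r (rows indexed by 'r, columns by 'n).\<close>

definition ones :: "real^'r" where
  "ones = (\<chi> i. 1)"

definition matrix_cone :: "real^'n^'r \<Rightarrow> (real^'r) set" where
  "matrix_cone H = {H *v y | y. \<forall>j. y $ j \<ge> 0}"

definition nc_ssc :: "real^'n^'r \<Rightarrow> bool" where
  "nc_ssc H \<longleftrightarrow> (\<forall>i. ones - axis i 1 \<in> matrix_cone H)"

definition pstar :: "real^'n^'r \<Rightarrow> real" where
  "pstar H = Sup (norm ` {x :: real^'r. ones \<bullet> x = 1 \<and> (\<forall>j. (transpose H *v x) $ j \<ge> 0)})"

definition qstar :: "real^'n^'r \<Rightarrow> real" where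
  "qstar H = Sup (norm ` {x :: real^'r. ones \<bullet> x = 1 \<and> (\<forall>j. (transpose H *v x) $ j \<ge> 0)
                                      \<and> (\<forall>i. -1 \<le> x $ i \<and> x $ i \<le> 1)})"

end

theory Submission
  imports Defs
begin

text \<open>Pairing the NC-SSC certificate of \<open>e - e\<^sub>i\<close> with a feasible \<open>x\<close> gives \<open>1 - x\<^sub>i \<ge> 0\<close>, so no
  feasible point has a coordinate above 1; the unit vectors are feasible points of norm 1, hence
  \<open>p\<^sup>* = 1\<close> (resp. \<open>q\<^sup>* = 1\<close>) just says that no feasible (resp. boxed feasible) point has norm
  above 1. If a feasible \<open>x\<close> of norm above 1 leaves the box, some coordinate is below -1;
  moving from \<open>x\<close> towards a unit vector \<open>e\<^sub>k\<close> (\<open>k\<close> not the minimising index) until the minimal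
  coordinate equals -1 stays feasible and lands in the box, and a vector with coordinate sum 1
  and a coordinate -1 has norm above 1.\<close>

definition feasible_set :: "real^'n^'r \<Rightarrow> (real^'r) set" where
  "feasible_set H = {x. ones \<bullet> x = 1 \<and> (\<forall>j. (transpose H *v x) $ j \<ge> 0)}"

definition box_feasible_set :: "real^'n^'r \<Rightarrow> (real^'r) set" where
  "box_feasible_set H = {x \<in> feasible_set H. \<forall>i. -1 \<le> x $ i \<and> x $ i \<le> 1}"

lemma pstar_eq_Sup_feasible_set: "pstar H = Sup (norm ` feasible_set H)"
  by (simp add: pstar_def feasible_set_def)

lemma qstar_eq_Sup_box_feasible_set: "qstar H = Sup (norm ` box_feasible_set H)"
  by (simp add: qstar_def box_feasible_set_def feasible_set_def conj_assoc)

lemma box_feasible_set_subset: "box_feasible_set H \<subseteq> feasible_set H"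
  by (auto simp: box_feasible_set_def)

lemma inner_ones: "ones \<bullet> (x::real^'r) = (\<Sum>i\<in>UNIV. x $ i)"
  by (simp add: ones_def inner_vec_def)

lemma cSup_eq_member_iff:
  fixes X :: "'a::conditionally_complete_lattice set"
  assumes "bdd_above X" "c \<in> X"
  shows "Sup X = c \<longleftrightarrow> (\<forall>x\<in>X. x \<le> c)"
  using assms cSup_upper cSup_eq_maximum by metis

lemma convex_feasible_set: "convex (feasible_set H)"
  unfolding convex_def feasible_set_def
  by (simp add: inner_add_right matrix_vector_right_distrib matrix_vector_mult_scaleR
      del: transpose_matrix_vector)

lemma axis_in_box_feasible_set:
  fixes H :: "real^'n^'r"
  assumes "\<forall>i j. H $ i $ j \<ge> 0"
  shows "axis k 1 \<in> box_feasible_set H"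
proof -
  have "(transpose H *v axis k 1) $ j = H $ k $ j" for j
    by (simp add: matrix_vector_mult_def transpose_def axis_def if_distrib cong: if_cong)
  then show ?thesis
    using assms by (simp add: box_feasible_set_def feasible_set_def inner_ones axis_def)
qed

lemma nc_ssc_feasible_component_le_one:
  fixes H :: "real^'n^'r"
  assumes "nc_ssc H" "x \<in> feasible_set H"
  shows "x $ i \<le> 1"
proof -
  obtain y where y: "ones - axis i 1 = H *v y" "\<forall>j. y $ j \<ge> 0"
    using assms(1) unfolding nc_ssc_def matrix_cone_def by blast
  have "(ones - axis i 1) \<bullet> x = y \<bullet> (transpose H *v x)"
    unfolding y(1) by (metis dot_lmul_matrix vector_transpose_matrix)
  also have "\<dots> = (\<Sum>j\<in>UNIV. y $ j * (transpose H *v x) $ j)"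
    by (simp add: inner_vec_def)
  also have "\<dots> \<ge> 0"
    using y(2) assms(2) by (intro sum_nonneg) (simp add: feasible_set_def)
  finally show ?thesis
    using assms(2) by (simp add: feasible_set_def inner_diff_left inner_axis')
qed

lemma nc_ssc_norm_feasible_le:
  fixes H :: "real^'n^'r"
  assumes "nc_ssc H" "x \<in> feasible_set H"
  shows "norm x \<le> 2 * real CARD('r) - 1"
proof -
  have "norm x \<le> (\<Sum>i\<in>UNIV. \<bar>x $ i\<bar>)"
    by (rule norm_le_l1_cart)
  also have "\<dots> \<le> (\<Sum>i\<in>UNIV. 2 - x $ i)"
    using nc_ssc_feasible_component_le_one[OF assms] by (intro sum_mono) (auto simp: abs_if)
  also have "\<dots> = 2 * real CARD('r) - 1"
    using assms(2) by (simp add: sum_subtractf feasible_set_def inner_ones)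
  finally show ?thesis .
qed

lemma nc_ssc_bdd_above_norm_feasible_set:
  fixes H :: "real^'n^'r"
  assumes "nc_ssc H"
  shows "bdd_above (norm ` feasible_set H)"
  by (rule bdd_aboveI2) (rule nc_ssc_norm_feasible_le[OF assms])

lemma one_less_norm_if_component_le_minus_one:
  fixes y :: "real^'r"
  assumes "ones \<bullet> y = 1" "y $ i \<le> -1"
  shows "1 < norm y"
proof -
  have "\<exists>j. j \<noteq> i \<and> y $ j \<noteq> 0"
  proof (rule ccontr)
    assume "\<nexists>j. j \<noteq> i \<and> y $ j \<noteq> 0"
    then have "(\<Sum>l\<in>UNIV - {i}. y $ l) = 0"
      by (intro sum.neutral) auto
    then have "(\<Sum>l\<in>UNIV. y $ l) = y $ i"
      by (simp add: sum.remove[of UNIV i])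
    then show False
      using assms by (simp add: inner_ones)
  qed
  then obtain j where "j \<noteq> i" "y $ j \<noteq> 0"
    by blast
  have "y $ i ^ 2 + y $ j ^ 2 = (\<Sum>l\<in>{i, j}. y $ l ^ 2)"
    using \<open>j \<noteq> i\<close> by simp
  also have "\<dots> \<le> (\<Sum>l\<in>UNIV. y $ l ^ 2)"
    by (intro sum_mono2) auto
  also have "\<dots> = norm y ^ 2"
    by (simp only: power2_norm_eq_inner) (simp add: inner_vec_def power2_eq_square)
  finally have "y $ i ^ 2 + y $ j ^ 2 \<le> norm y ^ 2" .
  moreover have "1 \<le> y $ i ^ 2"
    using power_mono[of 1 "- y $ i" 2] assms(2) by simp
  moreover have "0 < y $ j ^ 2"
    using \<open>y $ j \<noteq> 0\<close> by simp
  ultimately have "1 < norm y ^ 2"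
    by linarith
  then show ?thesis
    using power_less_imp_less_base[of 1 2 "norm y"] by simp
qed

lemma nc_ssc_exists_box_feasible_norm_gt_one:
  fixes H :: "real^'n^'r"
  assumes nonneg: "\<forall>i j. H $ i $ j \<ge> 0" and ssc: "nc_ssc H"
    and x: "x \<in> feasible_set H" "x \<notin> box_feasible_set H"
  shows "\<exists>y\<in>box_feasible_set H. 1 < norm y"
proof -
  obtain i where i_min: "\<And>j. x $ i \<le> x $ j"
    using ex_is_arg_min_if_finite[of UNIV "($) x"] by (auto simp: is_arg_min_linorder)
  have "\<exists>j. x $ j < -1"
    using x nc_ssc_feasible_component_le_one[OF ssc x(1)]
    by (auto simp: box_feasible_set_def not_le)
  then have "x $ i < -1"
    using i_min by (meson le_less_trans)
  have "UNIV \<noteq> {i}"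
  proof
    assume univ: "UNIV = {i}"
    have "ones \<bullet> x = x $ i"
      unfolding inner_ones univ by simp
    then show False
      using x(1) \<open>x $ i < -1\<close> by (simp add: feasible_set_def)
  qed
  then obtain k where "k \<noteq> i"
    by blast
  define t where "t = -1 / x $ i"
  have t: "0 < t" "t < 1" "t * x $ i = -1"
    using \<open>x $ i < -1\<close> by (auto simp: t_def field_simps)
  define y where "y = (1 - t) *\<^sub>R axis k 1 + t *\<^sub>R x"
  have y_feasible: "y \<in> feasible_set H"
    unfolding y_def using t x(1) axis_in_box_feasible_set[OF nonneg] box_feasible_set_subset
    by (intro convexD[OF convex_feasible_set]) auto
  have y_i: "y $ i = -1"
    using \<open>k \<noteq> i\<close> t by (simp add: y_def axis_def)
  have "-1 \<le> y $ j" for j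
  proof -
    have "-1 \<le> t * x $ j"
      using t mult_left_mono[OF i_min, of t] by simp
    then show ?thesis
      using t by (auto simp: y_def axis_def)
  qed
  then have "y \<in> box_feasible_set H"
    using y_feasible nc_ssc_feasible_component_le_one[OF ssc y_feasible]
    by (simp add: box_feasible_set_def)
  moreover have "1 < norm y"
    using y_feasible y_i
    by (intro one_less_norm_if_component_le_minus_one[of y i]) (auto simp: feasible_set_def)
  ultimately show ?thesis
    by blast
qed

theorem lemma3:
  fixes H :: "real^'n^'r"
  assumes "\<forall>i j. H $ i $ j \<ge> 0"
    and "nc_ssc H"
  shows "pstar H = 1 \<longleftrightarrow> qstar H = 1"
proof -
  fix k :: 'r
  have "axis k 1 \<in> box_feasible_set H"
    by (rule axis_in_box_feasible_set[OF assms(1)])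
  then have one: "1 \<in> norm ` feasible_set H" "1 \<in> norm ` box_feasible_set H"
    using box_feasible_set_subset by (auto intro!: image_eqI[where x = "axis k 1"])
  have bdd: "bdd_above (norm ` feasible_set H)" "bdd_above (norm ` box_feasible_set H)"
    using nc_ssc_bdd_above_norm_feasible_set[OF assms(2)] box_feasible_set_subset
    by (meson bdd_above_mono image_mono)+
  have "pstar H = 1 \<longleftrightarrow> (\<forall>x\<in>feasible_set H. norm x \<le> 1)"
    unfolding pstar_eq_Sup_feasible_set cSup_eq_member_iff[OF bdd(1) one(1)] by blast
  moreover have "qstar H = 1 \<longleftrightarrow> (\<forall>x\<in>box_feasible_set H. norm x \<le> 1)"
    unfolding qstar_eq_Sup_box_feasible_set cSup_eq_member_iff[OF bdd(2) one(2)] by blast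
  ultimately show ?thesis
    using box_feasible_set_subset nc_ssc_exists_box_feasible_norm_gt_one[OF assms]
    by (meson not_le subsetD)
qed

end
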